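(* For the iterates of SONATA with step-size $\alpha\in(0,1]$ under Assumptions (A), (B), (C), (W), for every $\nu\ge0$: $$\|\delta^\nu\|^2\le4L_{\max}^2\|x_\perp^\nu\|^2+2\|y_\perp^\nu\|^2.$$
   Context: Problem (P): minimize $U=F+G$ over $\mathcal K$, $F=\frac1m\sum_{i=1}^mf_i$. (A): $\mathcal K\subseteq\mathbb R^d$ nonempty closed convex; $f_i$ twice differentiable convex on open $\mathcal O\supseteq\mathcal K$; $\mu I\preceq\nabla^2F\preceq LI$ on $\mathcal K$ ($\mu>0$); $G$ convex on $\mathcal K$. $\nabla^2f_i\preceq L_iI$ on $\mathcal K$, $L_{\max}=\max_iL_i$. (B): connected undirected graph on $\{1,\dots,m\}$, edges $\mathcal E$. (W): $w_{ii}>0$; for $i\ne j$, $w_{ij}>0$ iff $(i,j)\in\mathcal E$, else 0; $W$ doubly stochastic. (C): $\tilde f_i:\mathcal O\times\mathcal O\to\mathbb R$ $C^2$, $\nabla\tilde f_i(x;x)=\nabla f_i(x)$, $\nabla\tilde f_i(\cdot;x)$ Lipschitz, $\tilde f_i(\cdot;x)$ strongly convex on $\mathcal K$ for $x\in\mathcal K$. SONATA: $x_i^0\in\mathcal K$, $y_i^0=\nabla f_i(x_i^0)$; $\hat x_i^\nu=\arg\min_{x_i\in\mathcal K}\tilde f_i(x_i;x_i^\nu)+(y_i^\nu-\nabla f_i(x_i^\nu))^\top(x_i-x_i^\nu)+G(x_i)$; $x_i^{\nu+1/2}=x_i^\nu+\alpha(\hat x_i^\nu-x_i^\nu)$; $x_i^{\nu+1}=\sum_jw_{ij}x_j^{\nu+1/2}$;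 $y_i^{\nu+1}=\sum_jw_{ij}(y_j^\nu+\nabla f_j(x_j^{\nu+1})-\nabla f_j(x_j^\nu))$. $\delta^\nu$ stacks $\delta_i^\nu=\nabla F(x_i^\nu)-y_i^\nu$; $x_\perp^\nu=x^\nu-\mathbf1_m\otimes\frac1m\sum_ix_i^\nu$, $y_\perp^\nu=y^\nu-\mathbf1_m\otimes\frac1m\sum_iy_i^\nu$, with $x^\nu,y^\nu$ stacking the local vectors. *)

theory Defs
  imports "HOL-Analysis.Analysis"
begin

text \<open>Convexity of a real function on a (possibly non-convex) set Om:
  the convexity inequality along every segment contained in Om.\<close>
definition convex_fun_on :: "'a::real_vector set \<Rightarrow> ('a \<Rightarrow> real) \<Rightarrow> bool" where
  "convex_fun_on Om f \<longleftrightarrow>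
     (\<forall>x\<in>Om. \<forall>y\<in>Om. \<forall>t::real. 0 \<le> t \<and> t \<le> 1 \<and> (1 - t) *\<^sub>R x + t *\<^sub>R y \<in> Om \<longrightarrow>
        f ((1 - t) *\<^sub>R x + t *\<^sub>R y) \<le> (1 - t) * f x + t * f y)"

definition strongly_convex_fun_on :: "'a::real_inner set \<Rightarrow> ('a \<Rightarrow> real) \<Rightarrow> bool" where
  "strongly_convex_fun_on K f \<longleftrightarrow>
     (\<exists>c>0. convex_on K (\<lambda>z. f z - (c / 2) * (norm z)\<^sup>2))"

definition C2_on :: "'b::euclidean_space set \<Rightarrow> ('b \<Rightarrow> real) \<Rightarrow> bool" where
  "C2_on S f \<longleftrightarrow>
     (\<exists>g H. (\<forall>z\<in>S. (f has_derivative (\<lambda>h. g z \<bullet> h)) (at z)) \<and>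
            (\<forall>z\<in>S. (g has_derivative blinfun_apply (H z)) (at z)) \<and>
            continuous_on S (H :: 'b \<Rightarrow> 'b \<Rightarrow>\<^sub>L 'b))"

end

theory Submission
  imports Defs
begin

(* Since the columns of W sum to one, gradient tracking preserves sum_i y_i = sum_i grad f_i(x_i),
   so the mean of the y_i is the mean of the local gradients, and grad F(x_i) - y_i splits into
   (1/m) sum_j (grad f_j(x_i) - grad f_j(x_j)) plus (mean y - y_i).  The iterates stay in K, where
   each grad f_j is L_j-Lipschitz: the Hessian of a convex C^2 function is symmetric positive
   semidefinite (both seen on limits of second difference quotients), so the bound on its
   quadratic form bounds its operator norm.  The identity
   sum_{i,j} |x_i - x_j|^2 = 2m sum_i |x_i - mean x|^2 and (a + b)^2 <= 2a^2 + 2b^2 give the constants. *)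

definition second_difference :: "('a::real_vector \<Rightarrow> real) \<Rightarrow> 'a \<Rightarrow> 'a \<Rightarrow> 'a \<Rightarrow> real \<Rightarrow> real" where
  "second_difference f z u v s = f (z + s *\<^sub>R u + s *\<^sub>R v) - f (z + s *\<^sub>R u) - f (z + s *\<^sub>R v) + f z"

lemma second_difference_commute: "second_difference f z u v = second_difference f z v u"
  by (auto simp: second_difference_def fun_eq_iff algebra_simps)

lemma second_difference_mean_value:
  fixes f :: "'a::real_inner \<Rightarrow> real"
  assumes fg: "\<And>x. x \<in> S \<Longrightarrow> (f has_derivative (\<lambda>h. g x \<bullet> h)) (at x)"
    and s: "0 < s"
    and segment: "\<And>t. 0 \<le> t \<Longrightarrow> t \<le> s \<Longrightarrow> z + t *\<^sub>R u + s *\<^sub>R v \<in> S \<and> z + t *\<^sub>R u \<in> S"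
  obtains \<theta> where "0 < \<theta>" "\<theta> < s"
    "second_difference f z u v s = s * ((g (z + \<theta> *\<^sub>R u + s *\<^sub>R v) - g (z + \<theta> *\<^sub>R u)) \<bullet> u)"
proof -
  have along_u: "((\<lambda>t. f (z + t *\<^sub>R u + p)) has_real_derivative g (z + t *\<^sub>R u + p) \<bullet> u) (at t)"
    if "z + t *\<^sub>R u + p \<in> S" for t p
  proof -
    have "((\<lambda>t. z + t *\<^sub>R u + p) has_derivative (\<lambda>h. h *\<^sub>R u)) (at t)"
      by (auto intro!: derivative_eq_intros)
    from has_derivative_compose[OF this fg[OF that]] show ?thesis
      unfolding has_field_derivative_def o_def by (simp add: mult_commute_abs)
  qed
  define \<phi> where "\<phi> t = f (z + t *\<^sub>R u + s *\<^sub>R v) - f (z + t *\<^sub>R u + 0)" for t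
  have "DERIV \<phi> t :> g (z + t *\<^sub>R u + s *\<^sub>R v) \<bullet> u - g (z + t *\<^sub>R u + 0) \<bullet> u"
    if "0 \<le> t" "t \<le> s" for t
    unfolding \<phi>_def[abs_def] using segment[OF that] by (intro DERIV_diff along_u) auto
  from MVT2[of 0 s \<phi>, OF _ this] s obtain \<theta> where "0 < \<theta>" "\<theta> < s"
    "\<phi> s - \<phi> 0 = s * (g (z + \<theta> *\<^sub>R u + s *\<^sub>R v) \<bullet> u - g (z + \<theta> *\<^sub>R u + 0) \<bullet> u)"
    by auto
  then show ?thesis
    by (intro that) (auto simp: \<phi>_def second_difference_def inner_diff_left)
qed

lemma second_difference_hessian_error:
  fixes g :: "'a::real_inner \<Rightarrow> 'a"
  assumes lin: "linear H" and s: "0 < s" and \<theta>: "0 \<le> \<theta>" "\<theta> \<le> s"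
    and mean_value: "second_difference f z u v s = s * ((g (z + \<theta> *\<^sub>R u + s *\<^sub>R v) - g (z + \<theta> *\<^sub>R u)) \<bullet> u)"
    and R: "norm u + norm v \<le> R"
    and remainder: "\<And>p. norm p \<le> s * R \<Longrightarrow> norm (g (z + p) - g z - H p) \<le> \<epsilon> * (s * R)"
  shows "\<bar>second_difference f z u v s - s\<^sup>2 * (H v \<bullet> u)\<bar> \<le> 2 * \<epsilon> * R * R * s\<^sup>2"
proof -
  define p1 where "p1 = \<theta> *\<^sub>R u + s *\<^sub>R v"
  define p2 where "p2 = \<theta> *\<^sub>R u"
  define E where "E = (g (z + p1) - g z - H p1) - (g (z + p2) - g z - H p2)"
  have "H p1 - H p2 = s *\<^sub>R H v"
    unfolding p1_def p2_def using lin by (simp add: linear_add linear_scale)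
  then have E_eq: "E = g (z + p1) - g (z + p2) - s *\<^sub>R H v"
    unfolding E_def by (simp add: algebra_simps)
  have "second_difference f z u v s = s * ((g (z + p1) - g (z + p2)) \<bullet> u)"
    using mean_value unfolding p1_def p2_def by (simp add: add.assoc)
  then have "\<bar>second_difference f z u v s - s\<^sup>2 * (H v \<bullet> u)\<bar> = \<bar>s * (E \<bullet> u)\<bar>"
    unfolding E_eq by (simp add: power2_eq_square inner_diff_left right_diff_distrib)
  also have "\<dots> = s * \<bar>E \<bullet> u\<bar>"
    using s by (simp add: abs_mult)
  also have "\<dots> \<le> s * ((\<epsilon> * (s * R) + \<epsilon> * (s * R)) * R)"
  proof (rule mult_left_mono)
    have "s * (norm u + norm v) \<le> s * R" using R s by (intro mult_left_mono) auto
    moreover have "norm p1 \<le> s * (norm u + norm v)"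
      unfolding p1_def using norm_triangle_ineq[of "\<theta> *\<^sub>R u" "s *\<^sub>R v"] \<theta> s
      by (simp add: distrib_left order_trans mult_right_mono)
    moreover have "norm p2 \<le> s * (norm u + norm v)"
      unfolding p2_def using mult_right_mono[OF \<theta>(2) norm_ge_zero[of u]] \<theta> s
      by (simp add: distrib_left add_increasing2)
    ultimately have "norm p1 \<le> s * R" "norm p2 \<le> s * R" by linarith+
    then have "norm E \<le> \<epsilon> * (s * R) + \<epsilon> * (s * R)"
      unfolding E_def using remainder by (meson add_mono norm_triangle_ineq4 order_trans)
    moreover have "norm u \<le> R" using R by (meson le_add_same_cancel1 norm_ge_zero order_trans)
    ultimately show "\<bar>E \<bullet> u\<bar> \<le> (\<epsilon> * (s * R) + \<epsilon> * (s * R)) * R"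
      using Cauchy_Schwarz_ineq2 by (meson mult_mono norm_ge_zero order_trans)
  qed (use s in simp)
  also have "\<dots> = 2 * \<epsilon> * R * R * s\<^sup>2" by (simp add: power2_eq_square algebra_simps)
  finally show ?thesis .
qed

lemma second_difference_estimate:
  fixes f :: "'a::real_inner \<Rightarrow> real"
  assumes S: "open S" "z \<in> S"
    and fg: "\<And>x. x \<in> S \<Longrightarrow> (f has_derivative (\<lambda>h. g x \<bullet> h)) (at x)"
    and gH: "(g has_derivative H) (at z)"
    and e: "0 < e"
  shows "\<exists>d>0. \<forall>s. 0 < s \<and> s < d \<longrightarrow> \<bar>second_difference f z u v s - s\<^sup>2 * (H v \<bullet> u)\<bar> \<le> e * s\<^sup>2"
proof -
  define R where "R = norm u + norm v + 1"
  have R: "0 < R" "norm u + norm v \<le> R" unfolding R_def by (auto intro: add_nonneg_pos)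
  define \<epsilon> where "\<epsilon> = e / (2 * R * R)"
  have \<epsilon>: "0 < \<epsilon>" "2 * \<epsilon> * R * R = e" using e R unfolding \<epsilon>_def by auto
  obtain r where r: "0 < r" "ball z r \<subseteq> S" using S open_contains_ball by blast
  obtain d1 where d1: "0 < d1"
    "\<And>y. norm (y - z) < d1 \<Longrightarrow> norm (g y - g z - H (y - z)) \<le> \<epsilon> * norm (y - z)"
    using gH \<epsilon> unfolding has_derivative_at_alt by meson
  show ?thesis
  proof (intro exI[of _ "min d1 r / R"] conjI allI impI)
    show "0 < min d1 r / R" using d1 r R by simp
    fix s :: real assume s: "0 < s \<and> s < min d1 r / R"
    then have sR: "s * R < min d1 r" using R by (simp add: pos_less_divide_eq)
    have close: "norm (t *\<^sub>R u + c *\<^sub>R v) \<le> s * R"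
      if "0 \<le> t" "t \<le> s" "0 \<le> c" "c \<le> s" for t c
    proof -
      have "norm (t *\<^sub>R u + c *\<^sub>R v) \<le> t * norm u + c * norm v"
        using norm_triangle_ineq[of "t *\<^sub>R u" "c *\<^sub>R v"] that by simp
      also have "\<dots> \<le> s * norm u + s * norm v"
        using that by (intro add_mono mult_right_mono) auto
      finally show ?thesis using s R(2) by (simp add: order_trans flip: distrib_left)
    qed
    have inS: "z + p \<in> S" if "norm p \<le> s * R" for p
      using that sR r by (auto simp: dist_norm intro!: subsetD[OF r(2)])
    obtain \<theta> where "0 < \<theta>" "\<theta> < s"
      "second_difference f z u v s = s * ((g (z + \<theta> *\<^sub>R u + s *\<^sub>R v) - g (z + \<theta> *\<^sub>R u)) \<bullet> u)"
    proof (rule second_difference_mean_value[OF fg])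
      show "z + t *\<^sub>R u + s *\<^sub>R v \<in> S \<and> z + t *\<^sub>R u \<in> S" if "0 \<le> t" "t \<le> s" for t
        using inS[OF close[of t s]] inS[OF close[of t 0]] that s by (simp add: add.assoc)
    qed (use s in auto)
    moreover have "norm (g (z + p) - g z - H p) \<le> \<epsilon> * (s * R)" if "norm p \<le> s * R" for p
      using d1(2)[of "z + p"] that sR \<epsilon>(1) by (simp add: order_trans mult_left_mono)
    ultimately show "\<bar>second_difference f z u v s - s\<^sup>2 * (H v \<bullet> u)\<bar> \<le> e * s\<^sup>2"
      using second_difference_hessian_error[OF has_derivative_linear[OF gH]] s R(2) \<epsilon>(2)
      by (metis less_eq_real_def)
  qed
qed

lemma second_difference_tendsto:
  fixes f :: "'a::real_inner \<Rightarrow> real"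
  assumes S: "open S" "z \<in> S"
    and fg: "\<And>x. x \<in> S \<Longrightarrow> (f has_derivative (\<lambda>h. g x \<bullet> h)) (at x)"
    and gH: "(g has_derivative H) (at z)"
  shows "((\<lambda>s. second_difference f z u v s / s\<^sup>2) \<longlongrightarrow> H v \<bullet> u) (at_right 0)"
proof (rule tendstoI)
  fix e :: real assume "0 < e"
  then obtain d where "0 < d" and d: "\<And>s. 0 < s \<and> s < d \<Longrightarrow>
      \<bar>second_difference f z u v s - s\<^sup>2 * (H v \<bullet> u)\<bar> \<le> e / 2 * s\<^sup>2"
    using second_difference_estimate[OF S fg gH, of "e / 2" u v] by auto
  have "dist (second_difference f z u v s / s\<^sup>2) (H v \<bullet> u) < e" if "0 < s" "s < d" for s
  proof -
    have "dist (second_difference f z u v s / s\<^sup>2) (H v \<bullet> u)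
        = \<bar>second_difference f z u v s - s\<^sup>2 * (H v \<bullet> u)\<bar> / s\<^sup>2"
      using that by (simp add: dist_real_def field_simps)
    also have "\<dots> \<le> e / 2" using d[of s] that by (simp add: divide_le_eq)
    finally show ?thesis using \<open>0 < e\<close> by linarith
  qed
  with \<open>0 < d\<close> show "\<forall>\<^sub>F s in at_right 0. dist (second_difference f z u v s / s\<^sup>2) (H v \<bullet> u) < e"
    unfolding eventually_at_right_field by blast
qed

lemma hessian_symmetric:
  fixes f :: "'a::real_inner \<Rightarrow> real"
  assumes "open S" "z \<in> S"
    and "\<And>x. x \<in> S \<Longrightarrow> (f has_derivative (\<lambda>h. g x \<bullet> h)) (at x)"
    and "(g has_derivative H) (at z)"
  shows "H v \<bullet> u = H u \<bullet> v"
  using second_difference_tendsto[OF assms, of u v] second_difference_tendsto[OF assms, of v u]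
  by (auto simp: second_difference_commute intro: tendsto_unique[OF trivial_limit_at_right_real])

lemma convex_fun_on_midpoint:
  assumes "convex_fun_on S f" "z + p \<in> S" "z - p \<in> S" "z \<in> S"
  shows "2 * f z \<le> f (z + p) + f (z - p)"
proof -
  have mid: "(1 - 1/2) *\<^sub>R (z + p) + (1/2::real) *\<^sub>R (z - p) = z"
    by (simp add: algebra_simps flip: scaleR_2)
  have "\<forall>t::real. 0 \<le> t \<and> t \<le> 1 \<and> (1 - t) *\<^sub>R (z + p) + t *\<^sub>R (z - p) \<in> S \<longrightarrow>
      f ((1 - t) *\<^sub>R (z + p) + t *\<^sub>R (z - p)) \<le> (1 - t) * f (z + p) + t * f (z - p)"
    using assms(1-3) unfolding convex_fun_on_def by blast
  from this[rule_format, of "1/2"] show ?thesis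
    unfolding mid using assms(4) by simp
qed

lemma hessian_nonneg:
  fixes f :: "'a::real_inner \<Rightarrow> real"
  assumes S: "open S" "z \<in> S"
    and fg: "\<And>x. x \<in> S \<Longrightarrow> (f has_derivative (\<lambda>h. g x \<bullet> h)) (at x)"
    and gH: "(g has_derivative H) (at z)"
    and cvx: "convex_fun_on S f"
  shows "0 \<le> H h \<bullet> h"
proof -
  have "((\<lambda>s. z + s *\<^sub>R h) \<longlongrightarrow> z) (at_right 0)" "((\<lambda>s. z - s *\<^sub>R h) \<longlongrightarrow> z) (at_right 0)"
    by (auto intro!: tendsto_eq_intros)
  then have "\<forall>\<^sub>F s in at_right 0. z + s *\<^sub>R h \<in> S \<and> z - s *\<^sub>R h \<in> S"
    using S by (auto intro!: eventually_conj topological_tendstoD)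
  then have "\<forall>\<^sub>F s in at_right 0. second_difference f z h (- h) s / s\<^sup>2 \<le> 0"
  proof eventually_elim
    case (elim s)
    then have "2 * f z \<le> f (z + s *\<^sub>R h) + f (z - s *\<^sub>R h)"
      by (intro convex_fun_on_midpoint[OF cvx _ _ S(2)]) auto
    then show ?case by (simp add: second_difference_def divide_nonpos_nonneg)
  qed
  moreover have "H (- h) \<bullet> h = - (H h \<bullet> h)"
    using has_derivative_linear[OF gH] by (simp add: linear_neg)
  ultimately show ?thesis
    using tendsto_upperbound[OF second_difference_tendsto[OF S fg gH, of h "- h"]] by fastforce
qed

lemma symmetric_psd_norm_le:
  fixes H :: "'a::real_inner \<Rightarrow> 'a"
  assumes lin: "linear H" and sym: "\<And>u v. H v \<bullet> u = H u \<bullet> v"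
    and psd: "\<And>h. 0 \<le> H h \<bullet> h" and upper: "\<And>h. H h \<bullet> h \<le> M * (h \<bullet> h)"
  shows "norm (H h) \<le> M * norm h"
proof (cases "h = 0")
  case True
  then show ?thesis using lin by (simp add: linear_0)
next
  case False
  then have "0 < h \<bullet> h" by simp
  moreover have "0 \<le> M * (h \<bullet> h)" using psd[of h] upper[of h] by linarith
  ultimately have "0 \<le> M" by (metis not_less zero_le_mult_iff)
  show ?thesis
  proof (cases "H h = 0")
    case True
    then show ?thesis using \<open>0 \<le> M\<close> by simp
  next
    case False
    \<comment> \<open>Polarization with k := H h rescaled to the length of h.\<close>
    define k where "k = (norm h / norm (H h)) *\<^sub>R H h"
    have nk: "norm k = norm h" and kH: "k \<bullet> H h = norm h * norm (H h)"
      unfolding k_def using False by (simp_all add: power2_norm_eq_inner[symmetric] power2_eq_square)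
    have "H (h + k) \<bullet> (h + k) - H (h - k) \<bullet> (h - k) = 2 * (H h \<bullet> k) + 2 * (H k \<bullet> h)"
      using lin by (simp add: linear_add linear_diff inner_add_left inner_add_right
          inner_diff_left inner_diff_right algebra_simps)
    also have "\<dots> = 4 * (norm h * norm (H h))" using sym[of h k] kH by (simp add: inner_commute)
    finally have "4 * (norm h * norm (H h)) \<le> M * (norm (h + k))\<^sup>2"
      using upper[of "h + k"] psd[of "h - k"] by (simp add: power2_norm_eq_inner)
    also have "\<dots> \<le> M * (2 * norm h)\<^sup>2"
      using norm_triangle_ineq[of h k] nk \<open>0 \<le> M\<close> by (intro mult_left_mono power_mono) auto
    finally have "norm h * norm (H h) \<le> norm h * (M * norm h)"
      by (simp add: power2_eq_square algebra_simps)
    then show ?thesis using \<open>h \<noteq> 0\<close> by simp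
  qed
qed

lemma gradient_lipschitz_on_convex:
  fixes f :: "'a::euclidean_space \<Rightarrow> real"
  assumes S: "open S" "K \<subseteq> S" and K: "convex K"
    and fg: "\<And>x. x \<in> S \<Longrightarrow> (f has_derivative (\<lambda>h. g x \<bullet> h)) (at x)"
    and gH: "\<And>x. x \<in> S \<Longrightarrow> (g has_derivative H x) (at x)"
    and cvx: "convex_fun_on S f"
    and upper: "\<And>x h. x \<in> K \<Longrightarrow> H x h \<bullet> h \<le> M * (h \<bullet> h)"
    and ab: "a \<in> K" "b \<in> K"
  shows "norm (g a - g b) \<le> M * norm (a - b)"
proof (rule differentiable_bound[OF K _ _ ab])
  fix x assume "x \<in> K"
  with S have x: "x \<in> S" by auto
  show "(g has_derivative H x) (at x within K)"
    using gH[OF x] by (rule has_derivative_at_withinI)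
  show "onorm (H x) \<le> M"
  proof (rule onorm_le, rule symmetric_psd_norm_le)
    show "linear (H x)" using gH[OF x] by (rule has_derivative_linear)
    show "H x v \<bullet> u = H x u \<bullet> v" for u v
      using hessian_symmetric[OF S(1) x fg gH[OF x]] .
    show "0 \<le> H x h \<bullet> h" for h
      using hessian_nonneg[OF S(1) x fg gH[OF x] cvx] .
    show "H x h \<bullet> h \<le> M * (h \<bullet> h)" for h
      using upper[OF \<open>x \<in> K\<close>] .
  qed
qed

lemma norm_add_sq_le: "(norm (a + b))\<^sup>2 \<le> 2 * (norm a)\<^sup>2 + 2 * (norm b)\<^sup>2"
proof -
  have "(norm (a + b))\<^sup>2 \<le> (norm a + norm b)\<^sup>2"
    by (intro power_mono norm_triangle_ineq) auto
  also have "\<dots> \<le> 2 * (norm a)\<^sup>2 + 2 * (norm b)\<^sup>2"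
    using zero_le_power2[of "norm a - norm b"] by (simp add: power2_eq_square algebra_simps)
  finally show ?thesis .
qed

lemma sum_pairwise_norm_diff_sq:
  fixes X :: "nat \<Rightarrow> 'a::real_inner"
  shows "(\<Sum>i<m. \<Sum>j<m. (norm (X i - X j))\<^sup>2)
    = 2 * real m * (\<Sum>i<m. (norm (X i - (1 / real m) *\<^sub>R (\<Sum>j<m. X j)))\<^sup>2)"
proof (cases "m = 0")
  case False
  define c where "c i = X i - (1 / real m) *\<^sub>R (\<Sum>j<m. X j)" for i
  have "(\<Sum>i<m. c i) = 0"
    unfolding c_def using False by (simp add: sum_subtractf sum_constant_scaleR)
  then have cross: "(\<Sum>i<m. \<Sum>j<m. c i \<bullet> c j) = 0"
    by (simp add: inner_sum_right[symmetric])
  have "X i - X j = c i - c j" for i j unfolding c_def by simp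
  then have "(\<Sum>i<m. \<Sum>j<m. (norm (X i - X j))\<^sup>2)
      = (\<Sum>i<m. \<Sum>j<m. (norm (c i))\<^sup>2 + (norm (c j))\<^sup>2 - 2 * (c i \<bullet> c j))"
    by (simp add: power2_norm_eq_inner inner_diff_left inner_diff_right inner_commute)
  also have "\<dots> = (\<Sum>i<m. \<Sum>j<m. (norm (c i))\<^sup>2) + (\<Sum>i<m. \<Sum>j<m. (norm (c j))\<^sup>2)
      - 2 * (\<Sum>i<m. \<Sum>j<m. c i \<bullet> c j)"
    by (simp add: sum.distrib sum_subtractf sum_distrib_left)
  also have "\<dots> = 2 * real m * (\<Sum>i<m. (norm (c i))\<^sup>2) - 2 * (\<Sum>i<m. \<Sum>j<m. c i \<bullet> c j)"
    by (simp add: sum_distrib_left mult.assoc)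
  also have "\<dots> = 2 * real m * (\<Sum>i<m. (norm (c i))\<^sup>2)"
    unfolding cross by simp
  finally show ?thesis unfolding c_def .
qed simp

lemma iterates_in_convex:
  fixes x xh :: "nat \<Rightarrow> nat \<Rightarrow> 'a::real_vector"
  assumes K: "convex K" and \<alpha>: "0 \<le> \<alpha>" "\<alpha> \<le> 1"
    and w_nonneg: "\<And>i j. i < m \<Longrightarrow> j < m \<Longrightarrow> 0 \<le> w i j"
    and w_rows: "\<And>i. i < m \<Longrightarrow> (\<Sum>j<m. w i j) = 1"
    and x0: "\<And>i. i < m \<Longrightarrow> x i 0 \<in> K"
    and xh: "\<And>i n. i < m \<Longrightarrow> xh i n \<in> K"
    and x_step: "\<And>i n. i < m \<Longrightarrow> x i (Suc n) = (\<Sum>j<m. w i j *\<^sub>R (x j n + \<alpha> *\<^sub>R (xh j n - x j n)))"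
    and i: "i < m"
  shows "x i n \<in> K"
  using i
proof (induction n arbitrary: i)
  case 0
  then show ?case by (rule x0)
next
  case (Suc n)
  have "x j n + \<alpha> *\<^sub>R (xh j n - x j n) \<in> K" if "j < m" for j
  proof -
    have "(1 - \<alpha>) *\<^sub>R x j n + \<alpha> *\<^sub>R xh j n \<in> K"
      using convexD[OF K Suc.IH[OF that] xh[OF that]] \<alpha> by simp
    then show ?thesis by (simp add: algebra_simps)
  qed
  then show ?case
    unfolding x_step[OF Suc.prems]
    using K w_rows[OF Suc.prems] w_nonneg[OF Suc.prems] by (auto intro!: convex_sum)
qed

lemma tracking_sum_invariant:
  fixes y g :: "nat \<Rightarrow> nat \<Rightarrow> 'a::real_vector"
  assumes w_cols: "\<And>j. j < m \<Longrightarrow> (\<Sum>i<m. w i j) = 1"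
    and y0: "\<And>i. i < m \<Longrightarrow> y i 0 = g i 0"
    and y_step: "\<And>i n. i < m \<Longrightarrow> y i (Suc n) = (\<Sum>j<m. w i j *\<^sub>R (y j n + g j (Suc n) - g j n))"
  shows "(\<Sum>i<m. y i n) = (\<Sum>i<m. g i n)"
proof (induction n)
  case 0
  then show ?case using y0 by simp
next
  case (Suc n)
  have "(\<Sum>i<m. y i (Suc n)) = (\<Sum>i<m. \<Sum>j<m. w i j *\<^sub>R (y j n + g j (Suc n) - g j n))"
    using y_step by simp
  also have "\<dots> = (\<Sum>j<m. (\<Sum>i<m. w i j) *\<^sub>R (y j n + g j (Suc n) - g j n))"
    by (subst sum.swap) (simp add: scaleR_sum_left)
  also have "\<dots> = (\<Sum>j<m. y j n) + (\<Sum>j<m. g j (Suc n)) - (\<Sum>j<m. g j n)"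
    using w_cols by (simp add: sum.distrib sum_subtractf)
  finally show ?case using Suc.IH by simp
qed

lemma sum_sq_norm_mean_difference_le:
  fixes X :: "nat \<Rightarrow> 'a::real_inner" and g :: "nat \<Rightarrow> 'a \<Rightarrow> 'b::real_normed_vector"
  assumes m: "0 < m"
    and lip: "\<And>i j k. i < m \<Longrightarrow> j < m \<Longrightarrow> k < m \<Longrightarrow> norm (g j (X i) - g j (X k)) \<le> M * norm (X i - X k)"
  shows "(\<Sum>i<m. (norm ((1 / real m) *\<^sub>R (\<Sum>j<m. g j (X i) - g j (X j))))\<^sup>2)
    \<le> 2 * M\<^sup>2 * (\<Sum>i<m. (norm (X i - (1 / real m) *\<^sub>R (\<Sum>j<m. X j)))\<^sup>2)"
proof -
  have "(norm ((1 / real m) *\<^sub>R (\<Sum>j<m. g j (X i) - g j (X j))))\<^sup>2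
      \<le> (M\<^sup>2 / real m) * (\<Sum>j<m. (norm (X i - X j))\<^sup>2)" if "i < m" for i
  proof -
    have "norm ((1 / real m) *\<^sub>R (\<Sum>j<m. g j (X i) - g j (X j)))
        = (1 / real m) * norm (\<Sum>j<m. g j (X i) - g j (X j))"
      by simp
    also have "\<dots> \<le> (1 / real m) * (\<Sum>j<m. norm (g j (X i) - g j (X j)))"
      by (intro mult_left_mono norm_sum) auto
    also have "\<dots> \<le> (1 / real m) * (\<Sum>j<m. M * norm (X i - X j))"
      using that by (intro mult_left_mono sum_mono lip) auto
    finally have "(norm ((1 / real m) *\<^sub>R (\<Sum>j<m. g j (X i) - g j (X j))))\<^sup>2
        \<le> ((1 / real m) * (\<Sum>j<m. M * norm (X i - X j)))\<^sup>2"
      by (intro power_mono) auto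
    also have "\<dots> = (1 / real m)\<^sup>2 * (\<Sum>j<m. M * norm (X i - X j))\<^sup>2"
      by (simp only: power_mult_distrib)
    also have "\<dots> \<le> (1 / real m)\<^sup>2 * ((\<Sum>j<m. (M * norm (X i - X j))\<^sup>2) * real m)"
      using sum_squared_le_sum_of_squares[of "\<lambda>j. M * norm (X i - X j)" "{..<m}"]
      by (intro mult_left_mono) auto
    also have "\<dots> = (M\<^sup>2 / real m) * (\<Sum>j<m. (norm (X i - X j))\<^sup>2)"
      using m by (simp add: power_mult_distrib sum_distrib_left[symmetric] power2_eq_square field_simps)
    finally show ?thesis .
  qed
  then have "(\<Sum>i<m. (norm ((1 / real m) *\<^sub>R (\<Sum>j<m. g j (X i) - g j (X j))))\<^sup>2)
      \<le> (\<Sum>i<m. (M\<^sup>2 / real m) * (\<Sum>j<m. (norm (X i - X j))\<^sup>2))"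
    by (intro sum_mono) simp
  also have "\<dots> = (M\<^sup>2 / real m) * (\<Sum>i<m. \<Sum>j<m. (norm (X i - X j))\<^sup>2)"
    by (simp add: sum_distrib_left)
  also have "\<dots> = 2 * M\<^sup>2 * (\<Sum>i<m. (norm (X i - (1 / real m) *\<^sub>R (\<Sum>j<m. X j)))\<^sup>2)"
    using m by (simp add: sum_pairwise_norm_diff_sq)
  finally show ?thesis .
qed

lemma tracking_error_bound:
  fixes X Y :: "nat \<Rightarrow> 'a::real_inner" and g :: "nat \<Rightarrow> 'a \<Rightarrow> 'a"
  assumes m: "0 < m"
    and lip: "\<And>i j k. i < m \<Longrightarrow> j < m \<Longrightarrow> k < m \<Longrightarrow> norm (g j (X i) - g j (X k)) \<le> M * norm (X i - X k)"
    and tracking: "(\<Sum>i<m. Y i) = (\<Sum>j<m. g j (X j))"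
  shows "(\<Sum>i<m. (norm ((1 / real m) *\<^sub>R (\<Sum>j<m. g j (X i)) - Y i))\<^sup>2)
    \<le> 4 * M\<^sup>2 * (\<Sum>i<m. (norm (X i - (1 / real m) *\<^sub>R (\<Sum>j<m. X j)))\<^sup>2)
      + 2 * (\<Sum>i<m. (norm (Y i - (1 / real m) *\<^sub>R (\<Sum>j<m. Y j)))\<^sup>2)"
proof -
  define D where "D i = (1 / real m) *\<^sub>R (\<Sum>j<m. g j (X i) - g j (X j))" for i
  have "(norm ((1 / real m) *\<^sub>R (\<Sum>j<m. g j (X i)) - Y i))\<^sup>2
      \<le> 2 * (norm (D i))\<^sup>2 + 2 * (norm (Y i - (1 / real m) *\<^sub>R (\<Sum>j<m. Y j)))\<^sup>2" for i
  proof -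
    have "(1 / real m) *\<^sub>R (\<Sum>j<m. g j (X i)) - Y i = D i + ((1 / real m) *\<^sub>R (\<Sum>j<m. Y j) - Y i)"
      unfolding D_def tracking by (simp add: sum_subtractf algebra_simps)
    then show ?thesis
      using norm_add_sq_le[of "D i" "(1 / real m) *\<^sub>R (\<Sum>j<m. Y j) - Y i"] by (metis norm_minus_commute)
  qed
  then have "(\<Sum>i<m. (norm ((1 / real m) *\<^sub>R (\<Sum>j<m. g j (X i)) - Y i))\<^sup>2)
      \<le> (\<Sum>i<m. 2 * (norm (D i))\<^sup>2 + 2 * (norm (Y i - (1 / real m) *\<^sub>R (\<Sum>j<m. Y j)))\<^sup>2)"
    by (intro sum_mono)
  also have "\<dots> = 2 * (\<Sum>i<m. (norm (D i))\<^sup>2) + 2 * (\<Sum>i<m. (norm (Y i - (1 / real m) *\<^sub>R (\<Sum>j<m. Y j)))\<^sup>2)"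
    by (simp add: sum.distrib sum_distrib_left)
  finally show ?thesis
    using sum_sq_norm_mean_difference_le[of m g X M, OF m lip] unfolding D_def by simp
qed

theorem lemma3p3:
  fixes m :: nat
    and K Om :: "'a::euclidean_space set"
    and f :: "nat \<Rightarrow> 'a \<Rightarrow> real" and gf :: "nat \<Rightarrow> 'a \<Rightarrow> 'a" and Hf :: "nat \<Rightarrow> 'a \<Rightarrow> 'a \<Rightarrow> 'a"
    and G :: "'a \<Rightarrow> real"
    and \<mu> L :: real and Li :: "nat \<Rightarrow> real"
    and E :: "(nat \<times> nat) set" and w :: "nat \<Rightarrow> nat \<Rightarrow> real"
    and ft :: "nat \<Rightarrow> 'a \<Rightarrow> 'a \<Rightarrow> real" and gft :: "nat \<Rightarrow> 'a \<Rightarrow> 'a \<Rightarrow> 'a"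
    and \<alpha> :: real
    and x y xh :: "nat \<Rightarrow> nat \<Rightarrow> 'a"   \<comment> \<open>x i \<nu> = x_i^\<nu>, y i \<nu> = y_i^\<nu>, xh i \<nu> = hat x_i^\<nu>\<close>
  assumes m_pos: "0 < m"
    \<comment> \<open>(A)\<close>
    and K_ne: "K \<noteq> {}" and K_closed: "closed K" and K_convex: "convex K"
    and O_open: "open Om" and KO: "K \<subseteq> Om"
    and f_grad: "\<And>i z. i < m \<Longrightarrow> z \<in> Om \<Longrightarrow> (f i has_derivative (\<lambda>h. gf i z \<bullet> h)) (at z)"
    and f_hess: "\<And>i z. i < m \<Longrightarrow> z \<in> Om \<Longrightarrow> (gf i has_derivative Hf i z) (at z)"
    and f_convex: "\<And>i. i < m \<Longrightarrow> convex_fun_on Om (f i)"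
    and mu_pos: "0 < \<mu>"
    and F_hess_lower: "\<And>z h. z \<in> K \<Longrightarrow> \<mu> * (h \<bullet> h) \<le> (1 / real m) * (\<Sum>i<m. Hf i z h \<bullet> h)"
    and F_hess_upper: "\<And>z h. z \<in> K \<Longrightarrow> (1 / real m) * (\<Sum>i<m. Hf i z h \<bullet> h) \<le> L * (h \<bullet> h)"
    and G_convex: "convex_on K G"
    and fi_hess_upper: "\<And>i z h. i < m \<Longrightarrow> z \<in> K \<Longrightarrow> Hf i z h \<bullet> h \<le> Li i * (h \<bullet> h)"
    \<comment> \<open>(B)\<close>
    and E_sub: "E \<subseteq> {..<m} \<times> {..<m}" and E_sym: "sym E"
    and E_conn: "\<And>i j. i < m \<Longrightarrow> j < m \<Longrightarrow> (i, j) \<in> E\<^sup>*"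
    \<comment> \<open>(W)\<close>
    and w_diag: "\<And>i. i < m \<Longrightarrow> 0 < w i i"
    and w_edge: "\<And>i j. i < m \<Longrightarrow> j < m \<Longrightarrow> i \<noteq> j \<Longrightarrow> (0 < w i j \<longleftrightarrow> (i, j) \<in> E)"
    and w_nonedge: "\<And>i j. i < m \<Longrightarrow> j < m \<Longrightarrow> i \<noteq> j \<Longrightarrow> (i, j) \<notin> E \<Longrightarrow> w i j = 0"
    and w_nonneg: "\<And>i j. i < m \<Longrightarrow> j < m \<Longrightarrow> 0 \<le> w i j"
    and w_rows: "\<And>i. i < m \<Longrightarrow> (\<Sum>j<m. w i j) = 1"
    and w_cols: "\<And>j. j < m \<Longrightarrow> (\<Sum>i<m. w i j) = 1"
    \<comment> \<open>(C)\<close>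
    and ft_C2: "\<And>i. i < m \<Longrightarrow> C2_on (Om \<times> Om) (\<lambda>p. ft i (fst p) (snd p))"
    and ft_grad: "\<And>i u z. i < m \<Longrightarrow> u \<in> Om \<Longrightarrow> z \<in> Om \<Longrightarrow>
                   ((\<lambda>v. ft i v z) has_derivative (\<lambda>h. gft i u z \<bullet> h)) (at u)"
    and ft_consistent: "\<And>i z. i < m \<Longrightarrow> z \<in> Om \<Longrightarrow> gft i z z = gf i z"
    and ft_lipschitz: "\<And>i z. i < m \<Longrightarrow> z \<in> K \<Longrightarrow> \<exists>C. C-lipschitz_on Om (\<lambda>u. gft i u z)"
    and ft_strong: "\<And>i z. i < m \<Longrightarrow> z \<in> K \<Longrightarrow> strongly_convex_fun_on K (\<lambda>u. ft i u z)"
    \<comment> \<open>step size\<close>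
    and alpha: "0 < \<alpha>" "\<alpha> \<le> 1"
    \<comment> \<open>SONATA iterates\<close>
    and x0: "\<And>i. i < m \<Longrightarrow> x i 0 \<in> K"
    and y0: "\<And>i. i < m \<Longrightarrow> y i 0 = gf i (x i 0)"
    and xh_in: "\<And>i n. i < m \<Longrightarrow> xh i n \<in> K"
    and xh_min: "\<And>i n z. i < m \<Longrightarrow> z \<in> K \<Longrightarrow>
        ft i (xh i n) (x i n) + (y i n - gf i (x i n)) \<bullet> (xh i n - x i n) + G (xh i n)
        \<le> ft i z (x i n) + (y i n - gf i (x i n)) \<bullet> (z - x i n) + G z"
    and x_step: "\<And>i n. i < m \<Longrightarrow>
        x i (Suc n) = (\<Sum>j<m. w i j *\<^sub>R (x j n + \<alpha> *\<^sub>R (xh j n - x j n)))"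
    and y_step: "\<And>i n. i < m \<Longrightarrow>
        y i (Suc n) = (\<Sum>j<m. w i j *\<^sub>R (y j n + gf j (x j (Suc n)) - gf j (x j n)))"
  shows "(\<Sum>i<m. (norm ((1 / real m) *\<^sub>R (\<Sum>j<m. gf j (x i \<nu>)) - y i \<nu>))\<^sup>2)
         \<le> 4 * (Max (Li ` {..<m}))\<^sup>2 * (\<Sum>i<m. (norm (x i \<nu> - (1 / real m) *\<^sub>R (\<Sum>j<m. x j \<nu>)))\<^sup>2)
           + 2 * (\<Sum>i<m. (norm (y i \<nu> - (1 / real m) *\<^sub>R (\<Sum>j<m. y j \<nu>)))\<^sup>2)"
proof -
  define M where "M = Max (Li ` {..<m})"
  have x_in_K: "x i n \<in> K" if "i < m" for i n
    using iterates_in_convex[OF K_convex _ alpha(2) w_nonneg w_rows x0 xh_in x_step that] alpha(1)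
    by simp
  have grad_lipschitz: "norm (gf j (x i \<nu>) - gf j (x k \<nu>)) \<le> M * norm (x i \<nu> - x k \<nu>)"
    if "i < m" "j < m" "k < m" for i j k
  proof (rule gradient_lipschitz_on_convex[OF O_open KO K_convex f_grad f_hess f_convex])
    have "Li j \<le> M" unfolding M_def using \<open>j < m\<close> by (intro Max_ge) auto
    then show "Hf j z h \<bullet> h \<le> M * (h \<bullet> h)" if "z \<in> K" for z h
      using fi_hess_upper[OF \<open>j < m\<close> that, of h] by (meson inner_ge_zero mult_right_mono order_trans)
  qed (use that x_in_K in auto)
  have "(\<Sum>i<m. y i \<nu>) = (\<Sum>j<m. gf j (x j \<nu>))"
    using tracking_sum_invariant[of m w y "\<lambda>j n. gf j (x j n)"] w_cols y0 y_step by simp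
  with tracking_error_bound[of m gf "\<lambda>i. x i \<nu>" M "\<lambda>i. y i \<nu>"] m_pos grad_lipschitz
  show ?thesis unfolding M_def by simp
qed

end
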